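(* Let $\Delta$ be a simplicial complex on vertex set $[n]$ with $f$-vector $(f_{-1},f_0,\dots,f_{n-1})$ (with $f_{i-1}$ the number of faces of cardinality $i$). Then \[ H(\mathbb{k}[\Delta],t)=\sum_{\ell=0}^n\alpha_\ell\, H(\mathbb{k}[\Delta_\ell],t),\qquad \alpha_\ell=\frac{f_{\ell-1}}{\binom n\ell}-\frac{f_\ell}{\binom n{\ell+1}}, \] with the convention $f_n/\binom n{n+1}=0$.
   Context: $S=\mathbb{k}[x_1,\dots,x_n]$; for a simplicial complex $\Delta$ on $[n]$, $\mathbb{k}[\Delta]=S/I_\Delta$ is its Stanley–Reisner ring and $H(\cdot,t)$ denotes the coarse ($\mathbb{N}$-graded) Hilbert series. For $0\le\ell\le n$, $\Delta_\ell=\{\sigma\subseteq[n]:|\sigma|\le\ell\}$ is the $(\ell-1)$-skeleton of the full simplex on $[n]$. *)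

theory Defs
  imports "HOL-Computational_Algebra.Formal_Power_Series"
begin

definition simplicial_complex :: "nat \<Rightarrow> nat set set \<Rightarrow> bool" where
  "simplicial_complex n \<Delta> \<longleftrightarrow>
     (\<forall>\<sigma>\<in>\<Delta>. \<sigma> \<subseteq> {1..n}) \<and> (\<forall>\<sigma>\<in>\<Delta>. \<forall>\<tau>. \<tau> \<subseteq> \<sigma> \<longrightarrow> \<tau> \<in> \<Delta>)"

text \<open>Number of faces of cardinality k, i.e. f_(k-1).\<close>
definition faces_card :: "nat set set \<Rightarrow> nat \<Rightarrow> nat" where
  "faces_card \<Delta> k = card {\<sigma>\<in>\<Delta>. card \<sigma> = k}"

text \<open>(l-1)-skeleton of the full simplex on [n].\<close>
definition skel :: "nat \<Rightarrow> nat \<Rightarrow> nat set set" where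
  "skel n l = {\<sigma>. \<sigma> \<subseteq> {1..n} \<and> card \<sigma> \<le> l}"

text \<open>Monomials of S = k[x_1..x_n] of degree d, as exponent vectors a with support in [n].\<close>
definition monomials_deg :: "nat \<Rightarrow> nat \<Rightarrow> (nat \<Rightarrow> nat) set" where
  "monomials_deg n d = {a. (\<forall>i. i \<notin> {1..n} \<longrightarrow> a i = 0) \<and> (\<Sum>i\<in>{1..n}. a i) = d}"

text \<open>A monomial x^a lies in the Stanley--Reisner ideal I_Delta (generated by the squarefree
  monomials x_tau, tau a non-face) iff it is divisible by some such generator.\<close>
definition in_SR_ideal :: "nat \<Rightarrow> nat set set \<Rightarrow> (nat \<Rightarrow> nat) \<Rightarrow> bool" where
  "in_SR_ideal n \<Delta> a \<longleftrightarrow> (\<exists>\<tau>. \<tau> \<subseteq> {1..n} \<and> \<tau> \<notin> \<Delta> \<and> (\<forall>i\<in>\<tau>. 1 \<le> a i))"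

text \<open>Hilbert function of k[Delta] = S/I_Delta: dim_k of the degree-d part, which (I_Delta being
  a monomial ideal) equals the number of degree-d monomials not in I_Delta.\<close>
definition SR_hilbert_fun :: "nat \<Rightarrow> nat set set \<Rightarrow> nat \<Rightarrow> nat" where
  "SR_hilbert_fun n \<Delta> d = card {a \<in> monomials_deg n d. \<not> in_SR_ideal n \<Delta> a}"

definition SR_hilbert_series :: "nat \<Rightarrow> nat set set \<Rightarrow> rat fps" where
  "SR_hilbert_series n \<Delta> = Abs_fps (\<lambda>d. of_nat (SR_hilbert_fun n \<Delta> d))"

end

theory Submission
  imports Defs
begin

text \<open>A monomial \<open>x^a\<close> survives in \<open>k[\<Delta>]\<close> exactly when its support is a face of \<open>\<Delta>\<close>, and the
  number \<open>g k d\<close> of degree-\<open>d\<close> monomials with a prescribed support depends only on the size \<open>k\<close>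
  of that support. Hence \<open>H(k[\<Delta>])\<close> has \<open>d\<close>-th coefficient \<open>\<Sum>k. f(k-1) g k d\<close>, and for the
  skeleton \<open>\<Delta>\<^sub>l\<close> this is \<open>\<Sum>k\<le>l. (n choose k) g k d\<close>. Writing \<open>f(k-1) = \<beta> k (n choose k)\<close>,
  Abel summation turns \<open>\<Sum>k. \<beta> k (n choose k) g k d\<close> into a combination of these partial sums
  with weights \<open>\<beta> l - \<beta> (l+1) = \<alpha> l\<close>.\<close>

definition monomials_supp :: "nat \<Rightarrow> nat \<Rightarrow> nat set \<Rightarrow> (nat \<Rightarrow> nat) set" where
  "monomials_supp n d \<sigma> = {a \<in> monomials_deg n d. {i. a i \<noteq> 0} = \<sigma>}"

definition supp_count :: "nat \<Rightarrow> nat \<Rightarrow> nat \<Rightarrow> nat" where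
  "supp_count n d k = card (monomials_supp n d {1..k})"

lemma finite_monomials_deg: "finite (monomials_deg n d)"
proof -
  have "monomials_deg n d \<subseteq>
      {f. \<forall>x. (x \<in> {1..n} \<longrightarrow> f x \<in> {0..d}) \<and> (x \<notin> {1..n} \<longrightarrow> f x = 0)}"
  proof
    fix a assume a: "a \<in> monomials_deg n d"
    have "a x \<le> d" if "x \<in> {1..n}" for x
    proof -
      have "a x \<le> (\<Sum>i\<in>{1..n}. a i)"
        using that by (intro member_le_sum) auto
      then show ?thesis using a by (simp add: monomials_deg_def)
    qed
    then show "a \<in> {f. \<forall>x. (x \<in> {1..n} \<longrightarrow> f x \<in> {0..d}) \<and> (x \<notin> {1..n} \<longrightarrow> f x = 0)}"
      using a by (auto simp: monomials_deg_def)
  qed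
  then show ?thesis
    by (rule finite_subset) (rule finite_set_of_finite_funs, auto)
qed

lemma finite_monomials_supp: "finite (monomials_supp n d \<sigma>)"
  using finite_monomials_deg by (simp add: monomials_supp_def)

lemma card_monomials_supp_le:
  assumes k: "bij_betw k \<tau> \<sigma>" and "\<sigma> \<subseteq> {1..n}" "\<tau> \<subseteq> {1..n}"
  shows "card (monomials_supp n d \<sigma>) \<le> card (monomials_supp n d \<tau>)"
proof -
  define F where "F a i = (if i \<in> \<tau> then a (k i) else 0)" for a :: "nat \<Rightarrow> nat" and i
  have "inj_on F (monomials_supp n d \<sigma>)"
  proof (rule inj_onI, rule ext)
    fix a b j assume a: "a \<in> monomials_supp n d \<sigma>" and b: "b \<in> monomials_supp n d \<sigma>"
      and e: "F a = F b"
    show "a j = b j"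
    proof (cases "j \<in> \<sigma>")
      case True
      then obtain i where "i \<in> \<tau>" "j = k i" using k by (metis bij_betw_iff_bijections)
      then show ?thesis using fun_cong[OF e, of i] by (simp add: F_def)
    next
      case False
      then show ?thesis using a b by (auto simp: monomials_supp_def)
    qed
  qed
  moreover have "F ` monomials_supp n d \<sigma> \<subseteq> monomials_supp n d \<tau>"
  proof clarify
    fix a assume a: "a \<in> monomials_supp n d \<sigma>"
    have zero: "\<forall>i. i \<notin> {1..n} \<longrightarrow> F a i = 0" using assms by (auto simp: F_def)
    have "(\<Sum>i\<in>{1..n}. F a i) = (\<Sum>i\<in>\<tau>. a (k i))"
      using assms zero by (subst sum.mono_neutral_right[of "{1..n}" \<tau>]) (auto simp: F_def)
    also have "\<dots> = (\<Sum>j\<in>\<sigma>. a j)" by (rule sum.reindex_bij_betw[OF k])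
    also have "\<dots> = (\<Sum>j\<in>{1..n}. a j)"
      using assms a by (intro sum.mono_neutral_left) (auto simp: monomials_supp_def)
    also have "\<dots> = d" using a by (simp add: monomials_supp_def monomials_deg_def)
    finally have "(\<Sum>i\<in>{1..n}. F a i) = d" .
    moreover have "{i. F a i \<noteq> 0} = \<tau>"
      using a k by (auto simp: F_def monomials_supp_def bij_betw_def)
    ultimately show "F a \<in> monomials_supp n d \<tau>"
      using zero by (simp add: monomials_supp_def monomials_deg_def)
  qed
  ultimately show ?thesis by (intro card_inj_on_le finite_monomials_supp)
qed

lemma card_monomials_supp:
  assumes "\<sigma> \<subseteq> {1..n}"
  shows "card (monomials_supp n d \<sigma>) = supp_count n d (card \<sigma>)"
proof -
  have "finite \<sigma>" using assms finite_subset by blast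
  moreover have "card \<sigma> \<le> n" using assms card_mono[of "{1..n}" \<sigma>] by simp
  ultimately obtain h where h: "bij_betw h \<sigma> {1..card \<sigma>}"
    using finite_same_card_bij[of \<sigma> "{1..card \<sigma>}"] by auto
  have "{1..card \<sigma>} \<subseteq> {1..n}" using \<open>card \<sigma> \<le> n\<close> by auto
  then show ?thesis
    unfolding supp_count_def using assms h bij_betw_the_inv_into[OF h]
    by (intro le_antisym card_monomials_supp_le) auto
qed

lemma SR_hilbert_fun_eq_sum_faces:
  assumes "simplicial_complex n \<Delta>"
  shows "SR_hilbert_fun n \<Delta> d = (\<Sum>\<sigma>\<in>\<Delta>. card (monomials_supp n d \<sigma>))"
proof -
  have sub: "\<forall>\<sigma>\<in>\<Delta>. \<sigma> \<subseteq> {1..n}" and closed: "\<forall>\<sigma>\<in>\<Delta>. \<forall>\<tau>. \<tau> \<subseteq> \<sigma> \<longrightarrow> \<tau> \<in> \<Delta>"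
    using assms by (auto simp: simplicial_complex_def)
  have "\<not> in_SR_ideal n \<Delta> a \<longleftrightarrow> {i. a i \<noteq> 0} \<in> \<Delta>" if "a \<in> monomials_deg n d" for a
  proof
    assume "\<not> in_SR_ideal n \<Delta> a"
    moreover have "{i. a i \<noteq> 0} \<subseteq> {1..n}" using that by (auto simp: monomials_deg_def)
    moreover have "\<forall>i\<in>{i. a i \<noteq> 0}. 1 \<le> a i" by auto
    ultimately show "{i. a i \<noteq> 0} \<in> \<Delta>" unfolding in_SR_ideal_def by blast
  next
    assume face: "{i. a i \<noteq> 0} \<in> \<Delta>"
    show "\<not> in_SR_ideal n \<Delta> a"
    proof
      assume "in_SR_ideal n \<Delta> a"
      then obtain \<tau> where "\<tau> \<notin> \<Delta>" "\<forall>i\<in>\<tau>. 1 \<le> a i" unfolding in_SR_ideal_def by blast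
      moreover from this have "\<tau> \<subseteq> {i. a i \<noteq> 0}" by auto
      ultimately show False using closed face by blast
    qed
  qed
  then have "{a \<in> monomials_deg n d. \<not> in_SR_ideal n \<Delta> a} = (\<Union>\<sigma>\<in>\<Delta>. monomials_supp n d \<sigma>)"
    by (auto simp: monomials_supp_def)
  moreover have "finite \<Delta>" using sub by (intro finite_subset[of \<Delta> "Pow {1..n}"]) auto
  moreover have "monomials_supp n d \<sigma> \<inter> monomials_supp n d \<tau> = {}" if "\<sigma> \<noteq> \<tau>" for \<sigma> \<tau>
    using that by (auto simp: monomials_supp_def)
  ultimately show ?thesis
    unfolding SR_hilbert_fun_def by (simp add: card_UN_disjoint finite_monomials_supp)
qed

lemma SR_hilbert_fun_eq_sum_f_vector:
  assumes "simplicial_complex n \<Delta>"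
  shows "SR_hilbert_fun n \<Delta> d = (\<Sum>k=0..n. faces_card \<Delta> k * supp_count n d k)"
proof -
  have sub: "\<forall>\<sigma>\<in>\<Delta>. \<sigma> \<subseteq> {1..n}" using assms by (simp add: simplicial_complex_def)
  then have "finite \<Delta>" by (intro finite_subset[of \<Delta> "Pow {1..n}"]) auto
  moreover have "card ` \<Delta> \<subseteq> {0..n}"
    using sub card_mono[of "{1..n}"] by fastforce
  ultimately have "(\<Sum>\<sigma>\<in>\<Delta>. card (monomials_supp n d \<sigma>))
      = (\<Sum>k=0..n. \<Sum>\<sigma>\<in>{\<sigma>\<in>\<Delta>. card \<sigma> = k}. card (monomials_supp n d \<sigma>))"
    by (intro sum.group[symmetric]) auto
  also have "\<dots> = (\<Sum>k=0..n. \<Sum>\<sigma>\<in>{\<sigma>\<in>\<Delta>. card \<sigma> = k}. supp_count n d k)"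
    using sub by (intro sum.cong refl) (auto simp: card_monomials_supp)
  finally show ?thesis
    using assms by (simp add: SR_hilbert_fun_eq_sum_faces faces_card_def)
qed

lemma simplicial_complex_skel: "simplicial_complex n (skel n l)"
  unfolding simplicial_complex_def skel_def
  by (auto intro: order_trans[OF card_mono] dest: finite_subset[OF _ finite_atLeastAtMost])

lemma faces_card_skel: "faces_card (skel n l) k = (if k \<le> l then n choose k else 0)"
proof -
  have "{\<sigma>\<in>skel n l. card \<sigma> = k} = (if k \<le> l then {B. B \<subseteq> {1..n} \<and> card B = k} else {})"
    by (auto simp: skel_def)
  then show ?thesis by (simp add: faces_card_def n_subsets)
qed

lemma SR_hilbert_fun_skel:
  assumes "l \<le> n"
  shows "SR_hilbert_fun n (skel n l) d = (\<Sum>k=0..l. (n choose k) * supp_count n d k)"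
proof -
  have "SR_hilbert_fun n (skel n l) d = (\<Sum>k\<in>{0..n}. if k \<le> l then (n choose k) * supp_count n d k else 0)"
    unfolding SR_hilbert_fun_eq_sum_f_vector[OF simplicial_complex_skel] faces_card_skel
    by (intro sum.cong) auto
  also have "\<dots> = (\<Sum>k\<in>{k\<in>{0..n}. k \<le> l}. (n choose k) * supp_count n d k)"
    by (rule sum.inter_filter[symmetric]) simp
  also have "{k\<in>{0..n}. k \<le> l} = {0..l}" using assms by auto
  finally show ?thesis .
qed

lemma abel_summation:
  fixes \<beta> c :: "nat \<Rightarrow> 'a::comm_ring"
  shows "(\<Sum>l=0..n. (\<beta> l - \<beta> (Suc l)) * (\<Sum>k=0..l. c k)) = (\<Sum>k=0..n. (\<beta> k - \<beta> (Suc n)) * c k)"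
proof (induction n)
  case 0
  show ?case by simp
next
  case (Suc n)
  have "(\<Sum>k=0..n. (\<beta> k - \<beta> (Suc n)) * c k) + (\<beta> (Suc n) - \<beta> (Suc (Suc n))) * (\<Sum>k=0..n. c k)
      = (\<Sum>k=0..n. (\<beta> k - \<beta> (Suc (Suc n))) * c k)"
    by (simp add: sum_distrib_left sum.distrib[symmetric] algebra_simps)
  then show ?case using Suc.IH by (simp add: algebra_simps)
qed

theorem proposition4p14:
  fixes n :: nat and \<Delta> :: "nat set set"
  assumes "simplicial_complex n \<Delta>"
  shows "SR_hilbert_series n \<Delta> =
    (\<Sum>l=0..n. fps_const
        (of_nat (faces_card \<Delta> l) / of_nat (n choose l)
         - (if l = n then 0 else of_nat (faces_card \<Delta> (l + 1)) / of_nat (n choose (l + 1))))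
      * SR_hilbert_series n (skel n l))" (is "_ = (\<Sum>l=0..n. fps_const (?\<alpha> l) * _)")
proof (rule fps_ext)
  fix d
  define \<beta> :: "nat \<Rightarrow> rat"
    where "\<beta> k = (if k \<le> n then of_nat (faces_card \<Delta> k) / of_nat (n choose k) else 0)" for k
  define c :: "nat \<Rightarrow> rat" where "c k = of_nat (n choose k) * of_nat (supp_count n d k)" for k
  have "fps_nth (\<Sum>l=0..n. fps_const (?\<alpha> l) * SR_hilbert_series n (skel n l)) d
      = (\<Sum>l=0..n. (\<beta> l - \<beta> (Suc l)) * (\<Sum>k=0..l. c k))"
    unfolding fps_sum_nth
    by (intro sum.cong refl) (auto simp: \<beta>_def c_def SR_hilbert_series_def SR_hilbert_fun_skel)
  also have "\<dots> = (\<Sum>k=0..n. (\<beta> k - \<beta> (Suc n)) * c k)"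
    by (rule abel_summation)
  also have "\<dots> = (\<Sum>k=0..n. of_nat (faces_card \<Delta> k * supp_count n d k))"
    by (intro sum.cong refl) (simp add: \<beta>_def c_def)
  also have "\<dots> = fps_nth (SR_hilbert_series n \<Delta>) d"
    by (simp add: SR_hilbert_series_def SR_hilbert_fun_eq_sum_f_vector[OF assms])
  finally show "fps_nth (SR_hilbert_series n \<Delta>) d
      = fps_nth (\<Sum>l=0..n. fps_const (?\<alpha> l) * SR_hilbert_series n (skel n l)) d" ..
qed

end
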